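(* Let $m,n,r\ge1$ and let $\sigma:I^m\to J^r(\mathbb R^m,\mathbb R^n)$ be a section with $\sigma^{(r-1)}=0$. Then one can write $\sigma=\sum_\beta\sigma_\beta$, the sum ranging over multi-indices $\beta=(\beta_1,\dots,\beta_k)$ with $1\le\beta_j\le m$ and $k=|\beta|\le r$ (up to permutation), for sections $\sigma_\beta:I^m\to J^r(\mathbb R^m,\mathbb R^n)$ such that: each $\sigma_\beta$ is primitive with respect to the constant hyperplane field $\tau_\beta=\ker(dx_{\beta_1}+\dots+dx_{\beta_k})$; each $\sigma_\beta$ depends smoothly on $\sigma$; and if $\sigma=0$ on an open neighborhood of a closed subset $A\subset I^m$, then every $\sigma_\beta=0$ on an open neighborhood of $A$.
   Context: $I=[-1,1]$. $J^r(\mathbb R^m,\mathbb R^n)\cong\mathbb R^m\times(\mathcal P_r)^n$ via Taylor polynomials of degree $\le r$, with linear structure (sum of sections) from $\mathbb R^n$; $\sigma^{(r-1)}$ is the truncation to degree $\le r-1$. A section $\sigma$ is primitive with respect to a hyperplane field $\tau$ if $\sigma^\perp=0$, where $\sigma^\perp(x)$ for $\sigma(x)=j^r(h)(x)$ consists of the $(r-1)$-jet of $h$ at $x$ and the derivatives $\partial_\nu\partial_\alpha h(x)$, $|\alpha|=r-1$, $\nu\in\tau_x$. *)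

theory Defs
  imports "HOL-Analysis.Analysis"
begin

text \<open>Points of R^m are vectors x :: real^'m ('m a finite index type,
so m = CARD('m) \<ge> 1), R^n-values are real^'n. A multi-index is a function
alpha :: 'm \<Rightarrow> nat with |alpha| = sum alpha UNIV. A fibre of J^r(R^m,R^n) over a point
is represented by the Taylor coefficients p :: ('m \<Rightarrow> nat) \<Rightarrow> real^'n of the
jet's Taylor polynomial sum_{|alpha| \<le> r} p alpha * y^alpha (so p alpha = d^alpha h(x) / alpha!),
coefficients with |alpha| > r being 0.  A section over I^m is a map
s :: real^'m \<Rightarrow> (('m \<Rightarrow> nat) \<Rightarrow> real^'n) (its values on the cube matter).\<close>

type_synonym ('m, 'n) fibre = "('m \<Rightarrow> nat) \<Rightarrow> real^'n"

definition mdeg :: "('m::finite \<Rightarrow> nat) \<Rightarrow> nat" where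
  "mdeg alpha = sum alpha UNIV"

definition mfact :: "('m::finite \<Rightarrow> nat) \<Rightarrow> real" where
  "mfact alpha = (\<Prod>j\<in>UNIV. fact (alpha j))"

definition cube :: "(real^'m::finite) set" where
  "cube = {x. \<forall>i. x$i \<in> {-1..1}}"

definition is_jet_section :: "nat \<Rightarrow> (real^'m::finite \<Rightarrow> ('m,'n::finite) fibre) \<Rightarrow> bool" where
  "is_jet_section r s \<longleftrightarrow> (\<forall>x\<in>cube. \<forall>alpha. mdeg alpha > r \<longrightarrow> s x alpha = 0)"

definition lower_trunc_zero :: "nat \<Rightarrow> (real^'m::finite \<Rightarrow> ('m,'n::finite) fibre) \<Rightarrow> bool" where
  "lower_trunc_zero r s \<longleftrightarrow> (\<forall>x\<in>cube. \<forall>alpha. mdeg alpha \<le> r - 1 \<longrightarrow> s x alpha = 0)"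

text \<open>Primitive with respect to a hyperplane field tau: the (r-1)-jet vanishes and
d_nu d_alpha h(x) = sum_j nu_j (alpha+e_j)! p(alpha+e_j) = 0 for |alpha| = r-1, nu in tau x.\<close>
definition primitive :: "nat \<Rightarrow> (real^'m::finite \<Rightarrow> (real^'m) set) \<Rightarrow>
    (real^'m \<Rightarrow> ('m,'n::finite) fibre) \<Rightarrow> bool" where
  "primitive r tau s \<longleftrightarrow> (\<forall>x\<in>cube.
     (\<forall>alpha. mdeg alpha \<le> r - 1 \<longrightarrow> s x alpha = 0) \<and>
     (\<forall>alpha nu. mdeg alpha = r - 1 \<longrightarrow> nu \<in> tau x \<longrightarrow>
        (\<Sum>j\<in>UNIV. (nu$j * mfact (alpha(j := alpha j + 1))) *\<^sub>R s x (alpha(j := alpha j + 1))) = 0))"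

text \<open>The constant hyperplane field ker(dx_{beta_1} + ... + dx_{beta_k}); the unordered
multi-index beta is encoded by its multiplicities beta :: 'm \<Rightarrow> nat, k = mdeg beta.\<close>
definition tau_hyp :: "('m::finite \<Rightarrow> nat) \<Rightarrow> real^'m \<Rightarrow> (real^'m) set" where
  "tau_hyp beta x = {nu. (\<Sum>j\<in>UNIV. real (beta j) * nu$j) = 0}"

definition beta_indices :: "nat \<Rightarrow> ('m::finite \<Rightarrow> nat) set" where
  "beta_indices r = {beta. 1 \<le> mdeg beta \<and> mdeg beta \<le> r}"

text \<open>Smoothness on the space H_r of fibres with only degree-r coefficients
(the fibres of sections with sigma^(r-1) = 0), a finite-dimensional space with
coordinates p alpha $ i, |alpha| = r: continuity and existence of continuous
partial derivatives of all orders.\<close>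
definition Hr :: "nat \<Rightarrow> ('m::finite,'n::finite) fibre set" where
  "Hr r = {p. \<forall>alpha. mdeg alpha \<noteq> r \<longrightarrow> p alpha = 0}"

definition contH :: "nat \<Rightarrow> (('m::finite,'n::finite) fibre \<Rightarrow> real) \<Rightarrow> bool" where
  "contH r g \<longleftrightarrow> (\<forall>p\<in>Hr r. \<forall>e>0. \<exists>d>0. \<forall>q\<in>Hr r.
      (\<forall>alpha. mdeg alpha = r \<longrightarrow> norm (q alpha - p alpha) < d) \<longrightarrow> \<bar>g q - g p\<bar> < e)"

fun CkH :: "nat \<Rightarrow> nat \<Rightarrow> (('m::finite,'n::finite) fibre \<Rightarrow> real) \<Rightarrow> bool" where
  "CkH r 0 g = contH r g"
| "CkH r (Suc k) g = (contH r g \<and>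
     (\<forall>alpha i. mdeg alpha = r \<longrightarrow> (\<exists>g'.
        (\<forall>p\<in>Hr r. ((\<lambda>t. g (p(alpha := p alpha + t *\<^sub>R axis i 1))) has_real_derivative g' p) (at 0))
        \<and> CkH r k g')))"

definition smoothH :: "nat \<Rightarrow> (('m::finite,'n::finite) fibre \<Rightarrow> real) \<Rightarrow> bool" where
  "smoothH r g \<longleftrightarrow> (\<forall>k. CkH r k g)"

definition smooth_fibre_map :: "nat \<Rightarrow> (('m::finite,'n::finite) fibre \<Rightarrow> ('m,'n) fibre) \<Rightarrow> bool" where
  "smooth_fibre_map r F \<longleftrightarrow>
     (\<forall>p\<in>Hr r. \<forall>alpha. mdeg alpha > r \<longrightarrow> F p alpha = 0) \<and>
     (\<forall>alpha i. mdeg alpha \<le> r \<longrightarrow> smoothH r (\<lambda>p. F p alpha $ i))"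

end

theory Submission imports Defs begin

text \<open>A jet with vanishing (r-1)-jet is a homogeneous polynomial p of degree r in the Taylor
variable y, and every such polynomial is a combination of r-th powers of the linear forms
\<open>\<beta>\<cdot>y\<close>, \<open>1 \<le> |\<beta>| \<le> r\<close>:
  \<open>p = \<Sum>\<beta>. c\<beta>(p) (\<beta>\<cdot>y)^r\<close>  with  \<open>c\<beta>(p) = (-1)^(r+|\<beta>|) / r! * \<Sum>|a|=r. \<Prod>j. (a j choose \<beta> j) * p a\<close>.
Comparing coefficients of \<open>y^\<alpha>\<close>, this is a dual-basis identity which factors over the
coordinates into the finite-difference identity \<open>\<Sum>b\<le>a. (-1)^b (a choose b) b^k = (-1)^a a! [k = a]\<close>
for \<open>k \<le> a\<close>. Each summand is primitive for \<open>ker (\<beta>\<cdot>dx)\<close>, since differentiating \<open>(\<beta>\<cdot>y)^r\<close> along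
\<open>\<nu>\<close> produces the factor \<open>\<beta>\<cdot>\<nu>\<close>; the coefficients \<open>c\<beta>\<close> are linear in p, hence smooth, and
vanish where p does.\<close>

lemma alternating_sum_binomial_Suc:
  fixes f :: "nat \<Rightarrow> real"
  shows "(\<Sum>b\<le>Suc n. (-1)^b * real (Suc n choose b) * f b) =
         - (\<Sum>b\<le>n. (-1)^b * real (n choose b) * (f (Suc b) - f b))"
proof -
  have "(\<Sum>b\<le>Suc n. (-1)^b * real (Suc n choose b) * f b) =
        f 0 + (\<Sum>b\<le>n. (-1)^(Suc b) * real (Suc n choose Suc b) * f (Suc b))"
    by (subst sum.atMost_Suc_shift) simp
  also have "\<dots> = f 0 + (\<Sum>b\<le>n. (-1)^(Suc b) * real (n choose Suc b) * f (Suc b))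
      - (\<Sum>b\<le>n. (-1)^b * real (n choose b) * f (Suc b))"
    by (simp add: sum.distrib[symmetric] sum_subtractf[symmetric] algebra_simps)
  also have "f 0 + (\<Sum>b\<le>n. (-1)^(Suc b) * real (n choose Suc b) * f (Suc b))
      = (\<Sum>b\<le>Suc n. (-1)^b * real (n choose b) * f b)"
    by (simp only: sum.atMost_Suc_shift) simp
  also have "\<dots> = (\<Sum>b\<le>n. (-1)^b * real (n choose b) * f b)"
    by simp
  finally show ?thesis by (simp add: sum_subtractf algebra_simps)
qed

lemma power_Suc_add_one_diff:
  fixes y :: real
  shows "(y + 1)^Suc k - y^Suc k = (\<Sum>i\<le>k. real (Suc k choose i) * y^i)"
proof -
  have "(y + 1)^Suc k = (\<Sum>i\<le>Suc k. real (Suc k choose i) * y^i)"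
    using binomial_ring[of y 1 "Suc k"] by simp
  then show ?thesis by simp
qed

lemma alternating_sum_binomial_power:
  "k \<le> n \<Longrightarrow> (\<Sum>b\<le>n. (-1)^b * real (n choose b) * (real b + x)^k) =
     (if k = n then (-1)^n * fact n else 0)"
proof (induction n arbitrary: k x)
  case 0
  then show ?case by simp
next
  case (Suc n)
  have shift: "(\<Sum>b\<le>Suc n. (-1)^b * real (Suc n choose b) * (real b + x)^k) =
      - (\<Sum>b\<le>n. (-1)^b * real (n choose b) * ((real b + x + 1)^k - (real b + x)^k))"
    by (subst alternating_sum_binomial_Suc) (simp add: add_ac)
  show ?case
  proof (cases k)
    case 0
    then show ?thesis unfolding shift by simp
  next
    case (Suc k')
    have "(\<Sum>b\<le>Suc n. (-1)^b * real (Suc n choose b) * (real b + x)^k) =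
      - (\<Sum>b\<le>n. (-1)^b * real (n choose b) * (\<Sum>i\<le>k'. real (Suc k' choose i) * (real b + x)^i))"
      by (subst shift) (simp only: Suc power_Suc_add_one_diff)
    also have "\<dots> = - (\<Sum>i\<le>k'. real (Suc k' choose i) * (\<Sum>b\<le>n. (-1)^b * real (n choose b) * (real b + x)^i))"
      by (simp add: sum_distrib_left sum_distrib_right mult_ac sum.swap[of _ "{..n}"])
    also have "\<dots> = - (\<Sum>i\<le>k'. if i = n then real (Suc k' choose n) * ((-1)^n * fact n) else 0)"
      using Suc.prems Suc by (intro arg_cong[where f=uminus] sum.cong refl) (simp add: Suc.IH)
    also have "\<dots> = (if k = Suc n then (-1)^Suc n * fact (Suc n) else 0)"
      using Suc.prems Suc by (auto simp: sum.delta algebra_simps)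
    finally show ?thesis .
  qed
qed

lemma member_le_mdeg: "a j \<le> mdeg (a :: 'm::finite \<Rightarrow> nat)"
  unfolding mdeg_def by (rule member_le_sum) auto

lemma mdeg_eq_0_iff: "mdeg (a :: 'm::finite \<Rightarrow> nat) = 0 \<longleftrightarrow> a = (\<lambda>_. 0)"
  by (auto simp: mdeg_def)

lemma mdeg_inc: "mdeg (alpha(j := alpha j + 1)) = mdeg alpha + 1"
proof -
  have "mdeg (alpha(j := alpha j + 1)) = (\<Sum>i\<in>UNIV. alpha i + (if i = j then 1 else 0))"
    unfolding mdeg_def by (intro sum.cong) auto
  then show ?thesis by (simp add: sum.distrib mdeg_def)
qed

lemma mdeg_strict_mono:
  assumes "\<forall>j. a j \<le> b j" and "a \<noteq> b"
  shows "mdeg (a :: 'm::finite \<Rightarrow> nat) < mdeg b"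
proof -
  from assms obtain j where "a j < b j" by (metis le_neq_implies_less ext)
  then show ?thesis unfolding mdeg_def by (intro sum_strict_mono_ex1) (use assms in auto)
qed

lemma mfact_pos: "mfact alpha > 0"
  unfolding mfact_def by (simp add: prod_pos)

lemma multi_index_box_eq_PiE: "{b. \<forall>j. b j \<le> a j} = PiE UNIV (\<lambda>j. {..a j})"
  by (auto simp: PiE_def Pi_def)

lemma finite_multi_index_box: "finite {b :: 'm::finite \<Rightarrow> nat. \<forall>j. b j \<le> a j}"
  unfolding multi_index_box_eq_PiE by (simp add: finite_PiE)

lemma finite_mdeg_le: "finite {a :: 'm::finite \<Rightarrow> nat. mdeg a \<le> r}"
  by (rule finite_subset[OF _ finite_multi_index_box[of "\<lambda>_. r"]])
     (auto intro: order_trans[OF member_le_mdeg])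

definition homog_indices :: "nat \<Rightarrow> ('m::finite \<Rightarrow> nat) set" where
  "homog_indices r = {a. mdeg a = r}"

lemma finite_homog_indices: "finite (homog_indices r :: ('m::finite \<Rightarrow> nat) set)"
  by (rule finite_subset[OF _ finite_mdeg_le[of r]]) (auto simp: homog_indices_def)

lemma finite_beta_indices: "finite (beta_indices r :: ('m::finite \<Rightarrow> nat) set)"
  by (rule finite_subset[OF _ finite_mdeg_le[of r]]) (auto simp: beta_indices_def)

definition monomial_val :: "('m::finite \<Rightarrow> nat) \<Rightarrow> ('m \<Rightarrow> nat) \<Rightarrow> real" where
  "monomial_val beta alpha = (\<Prod>j\<in>UNIV. real (beta j) ^ alpha j)"

lemma monomial_val_inc:
  "monomial_val beta (alpha(j := alpha j + 1)) = real (beta j) * monomial_val beta alpha"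
proof -
  have "monomial_val beta (alpha(j := alpha j + 1)) =
      (\<Prod>i\<in>UNIV. real (beta i) ^ alpha i * (if i = j then real (beta j) else 1))"
    unfolding monomial_val_def by (intro prod.cong) auto
  then show ?thesis by (simp add: prod.distrib monomial_val_def)
qed

definition ridge_coeff :: "nat \<Rightarrow> ('m::finite \<Rightarrow> nat) \<Rightarrow> ('m \<Rightarrow> nat) \<Rightarrow> real" where
  "ridge_coeff r beta a = (-1)^(r + mdeg beta) * (\<Prod>j\<in>UNIV. real (a j choose beta j)) / fact r"

definition ridge_scalar :: "nat \<Rightarrow> ('m::finite \<Rightarrow> nat) \<Rightarrow> ('m,'n::finite) fibre \<Rightarrow> real^'n" where
  "ridge_scalar r beta p = (\<Sum>a\<in>homog_indices r. ridge_coeff r beta a *\<^sub>R p a)"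

text \<open>The Taylor coefficients of \<open>c\<beta>(p) (\<beta>\<cdot>y)^r\<close>, where \<open>c\<beta>(p)\<close> is \<open>ridge_scalar r \<beta> p\<close>
and \<open>(\<beta>\<cdot>y)^r = \<Sum>|\<alpha>|=r. r!/\<alpha>! * monomial_val \<beta> \<alpha> * y^\<alpha>\<close>.\<close>

definition ridge_part :: "nat \<Rightarrow> ('m::finite \<Rightarrow> nat) \<Rightarrow> ('m,'n::finite) fibre \<Rightarrow> ('m,'n) fibre" where
  "ridge_part r beta p alpha =
     (if mdeg alpha = r then (fact r / mfact alpha * monomial_val beta alpha) *\<^sub>R ridge_scalar r beta p
      else 0)"

lemma prod_alternating_sum_binomial_power:
  fixes a alpha :: "'m::finite \<Rightarrow> nat"
  assumes "mdeg a = mdeg alpha"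
  shows "(\<Prod>j\<in>UNIV. \<Sum>b\<le>a j. (-1)^b * real (a j choose b) * real b ^ alpha j) =
         (if a = alpha then (-1)^mdeg alpha * mfact alpha else 0)"
proof (cases "a = alpha")
  case True
  have "(\<Prod>j\<in>UNIV. \<Sum>b\<le>a j. (-1)^b * real (a j choose b) * real b ^ alpha j) =
        (\<Prod>j\<in>UNIV. (-1)^(alpha j) * fact (alpha j))"
    using True alternating_sum_binomial_power[OF order_refl, of _ 0] by simp
  also have "\<dots> = (-1)^mdeg alpha * mfact alpha"
    by (simp add: prod.distrib mfact_def mdeg_def power_sum[symmetric])
  finally show ?thesis using True by simp
next
  case False
  have "\<exists>j. alpha j < a j"
  proof (rule ccontr)
    assume "\<nexists>j. alpha j < a j"
    then have "mdeg a < mdeg alpha" using False by (intro mdeg_strict_mono) (auto simp: not_less)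
    with assms show False by simp
  qed
  then obtain j where "alpha j < a j" by blast
  then show ?thesis
    using False alternating_sum_binomial_power[of "alpha j" "a j" 0] by (subst prod_zero) auto
qed

text \<open>Only the multi-indices \<open>\<beta> \<le> a\<close> contribute, because of the factors \<open>a j choose \<beta> j\<close>;
the index \<open>\<beta> = 0\<close>, which lies in the box but not in \<open>beta_indices r\<close>, contributes \<open>0^\<alpha> = 0\<close>.\<close>

lemma sum_beta_indices_eq_sum_box:
  fixes a alpha :: "'m::finite \<Rightarrow> nat"
  assumes "mdeg a = r" and "mdeg alpha = r" and "r \<ge> 1"
  shows "(\<Sum>beta\<in>beta_indices r. ridge_coeff r beta a * monomial_val beta alpha) =
         (\<Sum>beta\<in>{b. \<forall>j. b j \<le> a j}. ridge_coeff r beta a * monomial_val beta alpha)"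
proof -
  let ?B = "{b. \<forall>j. b j \<le> a j}" and ?f = "\<lambda>beta. ridge_coeff r beta a * monomial_val beta alpha"
  have outside_box: "?f b = 0" if "b \<notin> ?B" for b
  proof -
    from that obtain j where "a j < b j" by (auto simp: not_le)
    then show ?thesis unfolding ridge_coeff_def by (subst prod_zero) auto
  qed
  have at_zero: "?f b = 0" if "b \<in> ?B - beta_indices r" for b
  proof -
    have "mdeg b \<le> mdeg a" using that unfolding mdeg_def by (auto intro: sum_mono)
    with that assms have "mdeg b = 0" by (auto simp: beta_indices_def)
    then have "b = (\<lambda>_. 0)" by (simp only: mdeg_eq_0_iff)
    moreover obtain j where "alpha j \<noteq> 0" using assms by (metis mdeg_eq_0_iff not_one_le_zero)
    ultimately have "monomial_val b alpha = 0" unfolding monomial_val_def by (intro prod_zero) auto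
    then show ?thesis by simp
  qed
  have "sum ?f (beta_indices r) = sum ?f (beta_indices r \<union> ?B)"
    using at_zero by (intro sum.mono_neutral_left) (auto simp: finite_beta_indices finite_multi_index_box)
  also have "\<dots> = sum ?f ?B"
    using outside_box by (intro sum.mono_neutral_right) (auto simp: finite_beta_indices finite_multi_index_box)
  finally show ?thesis .
qed

lemma ridge_coeff_dual:
  fixes alpha a :: "'m::finite \<Rightarrow> nat"
  assumes "r \<ge> 1" and "mdeg alpha = r" and "mdeg a = r"
  shows "(\<Sum>beta\<in>beta_indices r. fact r / mfact alpha * monomial_val beta alpha * ridge_coeff r beta a) =
         (if a = alpha then 1 else 0)"
proof -
  have sign: "(-1::real)^(r + mdeg beta) = (-1)^r * (\<Prod>j\<in>UNIV. (-1)^(beta j))" for beta :: "'m \<Rightarrow> nat"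
    by (simp add: mdeg_def power_add power_sum)
  have "(\<Sum>beta\<in>beta_indices r. fact r / mfact alpha * monomial_val beta alpha * ridge_coeff r beta a) =
      fact r / mfact alpha * (\<Sum>beta\<in>beta_indices r. ridge_coeff r beta a * monomial_val beta alpha)"
    by (simp add: sum_distrib_left mult_ac)
  also have "(\<Sum>beta\<in>beta_indices r. ridge_coeff r beta a * monomial_val beta alpha) =
      (\<Sum>beta\<in>PiE UNIV (\<lambda>j. {..a j}).
        (-1)^r / fact r * (\<Prod>j\<in>UNIV. (-1)^(beta j) * real (a j choose beta j) * real (beta j) ^ alpha j))"
    unfolding sum_beta_indices_eq_sum_box[OF assms(3,2,1)] multi_index_box_eq_PiE
    by (intro sum.cong refl) (simp add: ridge_coeff_def monomial_val_def sign prod.distrib)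
  also have "\<dots> = (-1)^r / fact r * (\<Prod>j\<in>UNIV. \<Sum>b\<le>a j. (-1)^b * real (a j choose b) * real b ^ alpha j)"
    by (simp add: prod_sum_PiE sum_distrib_left)
  also have "\<dots> = (if a = alpha then mfact alpha / fact r else 0)"
    using assms by (simp add: prod_alternating_sum_binomial_power power_add[symmetric])
  finally show ?thesis
    using mfact_pos[of alpha] by simp
qed

lemma ridge_part_decomp:
  assumes "r \<ge> 1" and "p \<in> Hr r"
  shows "p alpha = (\<Sum>beta\<in>beta_indices r. ridge_part r beta p alpha)"
proof (cases "mdeg alpha = r")
  case False
  then show ?thesis using assms(2) by (simp add: ridge_part_def Hr_def)
next
  case True
  have "(\<Sum>beta\<in>beta_indices r. ridge_part r beta p alpha) =
      (\<Sum>a\<in>homog_indices r. (\<Sum>beta\<in>beta_indices r.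
         fact r / mfact alpha * monomial_val beta alpha * ridge_coeff r beta a) *\<^sub>R p a)"
    using True by (simp add: ridge_part_def ridge_scalar_def scaleR_sum_right scaleR_sum_left sum.swap[of _ "beta_indices r"])
  also have "\<dots> = (\<Sum>a\<in>homog_indices r. if a = alpha then p a else 0)"
    using ridge_coeff_dual[OF assms(1) True] by (intro sum.cong) (auto simp: homog_indices_def)
  also have "\<dots> = p alpha"
    using sum.delta[OF finite_homog_indices, of alpha p r] True by (simp add: homog_indices_def)
  finally show ?thesis by simp
qed

lemma ridge_part_primitive:
  fixes s :: "real^'m::finite \<Rightarrow> ('m,'n::finite) fibre"
  assumes "r \<ge> 1"
  shows "primitive r (tau_hyp beta) (\<lambda>x. ridge_part r beta (s x))"
  unfolding primitive_def
proof (intro ballI conjI allI impI)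
  fix x :: "real^'m" and alpha :: "'m \<Rightarrow> nat"
  assume "mdeg alpha \<le> r - 1"
  then show "ridge_part r beta (s x) alpha = 0" using assms by (simp add: ridge_part_def)
next
  fix x :: "real^'m" and alpha :: "'m \<Rightarrow> nat" and nu :: "real^'m"
  assume alpha: "mdeg alpha = r - 1" and nu: "nu \<in> tau_hyp beta x"
  let ?c = "ridge_scalar r beta (s x)" and ?a = "\<lambda>j. alpha(j := alpha j + 1)"
  have "(\<Sum>j\<in>UNIV. (nu$j * mfact (?a j)) *\<^sub>R ridge_part r beta (s x) (?a j))
      = (\<Sum>j\<in>UNIV. (fact r * monomial_val beta alpha * (real (beta j) * nu$j)) *\<^sub>R ?c)"
  proof (intro sum.cong refl)
    fix j
    have "mdeg (?a j) = r" using alpha assms mdeg_inc[of alpha j] by simp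
    then show "(nu$j * mfact (?a j)) *\<^sub>R ridge_part r beta (s x) (?a j)
      = (fact r * monomial_val beta alpha * (real (beta j) * nu$j)) *\<^sub>R ?c"
      using mfact_pos[of "?a j"] monomial_val_inc[of beta alpha j] by (simp add: ridge_part_def)
  qed
  also have "\<dots> = (fact r * monomial_val beta alpha * (\<Sum>j\<in>UNIV. real (beta j) * nu$j)) *\<^sub>R ?c"
    by (simp add: scaleR_sum_left[symmetric] sum_distrib_left)
  also have "\<dots> = 0" using nu by (simp add: tau_hyp_def)
  finally show "(\<Sum>j\<in>UNIV. (nu$j * mfact (?a j)) *\<^sub>R ridge_part r beta (s x) (?a j)) = 0" .
qed

lemma ridge_part_zero: "ridge_part r beta (\<lambda>alpha. 0) = (\<lambda>alpha. 0)"
  by (auto simp: ridge_part_def ridge_scalar_def)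

lemma CkH_const: "CkH r k (\<lambda>p. c)"
proof (induction k arbitrary: c)
  case 0
  then show ?case by (simp add: contH_def)
next
  case (Suc k)
  then show ?case by (simp add: contH_def) (metis DERIV_const)
qed

lemma Hr_component_dist_le:
  assumes "p \<in> Hr r" and "q \<in> Hr r" and "d > 0"
    and "\<forall>alpha. mdeg alpha = r \<longrightarrow> norm (q alpha - p alpha) < d"
  shows "\<bar>q a $ i - p a $ i\<bar> \<le> d"
proof (cases "mdeg a = r")
  case True
  have "\<bar>q a $ i - p a $ i\<bar> \<le> norm (q a - p a)"
    using component_le_norm_cart[of "q a - p a" i] by simp
  also have "\<dots> \<le> d" using assms(4) True by (simp add: less_imp_le)
  finally show ?thesis .
next
  case False
  then show ?thesis using assms by (simp add: Hr_def)
qed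

lemma contH_linear:
  fixes D :: "('m::finite \<Rightarrow> nat) set" and i :: "'n::finite"
  assumes "finite D"
  shows "contH r (\<lambda>p. \<Sum>a\<in>D. w a * (p a $ i))"
  unfolding contH_def
proof (intro ballI allI impI)
  fix p :: "('m, 'n) fibre" and e :: real
  assume p: "p \<in> Hr r" and e: "e > 0"
  define W where "W = (\<Sum>a\<in>D. \<bar>w a\<bar>)"
  have "W \<ge> 0" unfolding W_def by (simp add: sum_nonneg)
  then have d: "e / (1 + W) > 0" and Wd: "W * (e / (1 + W)) < e"
    using e by (auto simp: field_simps)
  show "\<exists>d>0. \<forall>q\<in>Hr r. (\<forall>alpha. mdeg alpha = r \<longrightarrow> norm (q alpha - p alpha) < d) \<longrightarrow>
      \<bar>(\<Sum>a\<in>D. w a * (q a $ i)) - (\<Sum>a\<in>D. w a * (p a $ i))\<bar> < e"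
  proof (intro exI[of _ "e / (1 + W)"] conjI d ballI impI)
    fix q assume q: "q \<in> Hr r" and close: "\<forall>alpha. mdeg alpha = r \<longrightarrow> norm (q alpha - p alpha) < e / (1 + W)"
    have "\<bar>(\<Sum>a\<in>D. w a * (q a $ i)) - (\<Sum>a\<in>D. w a * (p a $ i))\<bar> \<le> (\<Sum>a\<in>D. \<bar>w a\<bar> * \<bar>q a $ i - p a $ i\<bar>)"
      by (simp add: sum_subtractf[symmetric] right_diff_distrib[symmetric] abs_mult[symmetric] sum_abs)
    also have "\<dots> \<le> (\<Sum>a\<in>D. \<bar>w a\<bar> * (e / (1 + W)))"
      using Hr_component_dist_le[OF p q d close] by (intro sum_mono mult_left_mono) auto
    also have "\<dots> = W * (e / (1 + W))" unfolding W_def by (rule sum_distrib_right[symmetric])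
    also have "\<dots> < e" by (rule Wd)
    finally show "\<bar>(\<Sum>a\<in>D. w a * (q a $ i)) - (\<Sum>a\<in>D. w a * (p a $ i))\<bar> < e" .
  qed
qed

lemma CkH_linear:
  fixes D :: "('m::finite \<Rightarrow> nat) set" and i :: "'n::finite"
  assumes "finite D"
  shows "CkH r k (\<lambda>p. \<Sum>a\<in>D. w a * (p a $ i))"
proof (cases k)
  case 0
  then show ?thesis using contH_linear[OF assms] by simp
next
  case (Suc k')
  have partial: "((\<lambda>t. \<Sum>a\<in>D. w a * ((p(alpha := p alpha + t *\<^sub>R axis i' 1)) a $ i))
         has_real_derivative (if alpha \<in> D \<and> i' = i then w alpha else 0)) (at 0)"
    for p :: "('m, 'n) fibre" and alpha i'
  proof -
    have update: "(\<Sum>a\<in>D. w a * ((p(alpha := p alpha + t *\<^sub>R axis i' 1)) a $ i)) =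
        (\<Sum>a\<in>D. w a * (p a $ i)) + (\<Sum>a\<in>D. if a = alpha then t * (w a * axis i' 1 $ i) else 0)" for t
      by (subst sum.distrib[symmetric], rule sum.cong) (auto simp: algebra_simps)
    have increment: "(\<Sum>a\<in>D. if a = alpha then t * (w a * axis i' 1 $ i) else 0) =
        t * (if alpha \<in> D \<and> i' = i then w alpha else 0)" for t
      using assms by (simp add: axis_def)
    show ?thesis unfolding update increment by (auto intro!: derivative_eq_intros)
  qed
  have "\<exists>g'. (\<forall>p\<in>Hr r. ((\<lambda>t. \<Sum>a\<in>D. w a * ((p(alpha := p alpha + t *\<^sub>R axis i' 1)) a $ i))
          has_real_derivative g' p) (at 0)) \<and> CkH r k' g'" for alpha i'
    using partial CkH_const
    by (intro exI[of _ "\<lambda>_. if alpha \<in> D \<and> i' = i then w alpha else 0"]) blast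
  then show ?thesis using Suc contH_linear[OF assms] by simp
qed

lemma ridge_part_smooth:
  "smooth_fibre_map r (ridge_part r beta :: ('m::finite,'n::finite) fibre \<Rightarrow> ('m,'n) fibre)"
  unfolding smooth_fibre_map_def
proof (intro conjI allI impI ballI)
  fix p :: "('m,'n) fibre" and alpha :: "'m \<Rightarrow> nat"
  assume "r < mdeg alpha"
  then show "ridge_part r beta p alpha = 0" by (simp add: ridge_part_def)
next
  fix alpha :: "'m \<Rightarrow> nat" and i :: 'n
  define K where "K = (if mdeg alpha = r then fact r / mfact alpha * monomial_val beta alpha else 0)"
  have "(\<lambda>p. ridge_part r beta p alpha $ i) = (\<lambda>p. \<Sum>a\<in>homog_indices r. (K * ridge_coeff r beta a) * (p a $ i))"
    by (auto simp: ridge_part_def K_def ridge_scalar_def sum_distrib_left mult_ac)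
  then show "smoothH r (\<lambda>p. ridge_part r beta p alpha $ i)"
    unfolding smoothH_def by (simp add: CkH_linear finite_homog_indices)
qed

lemma jet_section_in_Hr:
  fixes sigma :: "real^'m::finite \<Rightarrow> ('m,'n::finite) fibre" and x :: "real^'m"
  assumes "is_jet_section r sigma" and "lower_trunc_zero r sigma" and "x \<in> cube"
  shows "sigma x \<in> Hr r"
  unfolding Hr_def
proof (intro CollectI allI impI)
  fix alpha :: "'m \<Rightarrow> nat"
  assume "mdeg alpha \<noteq> r"
  then have "r < mdeg alpha \<or> mdeg alpha \<le> r - 1" by linarith
  then show "sigma x alpha = 0"
    using assms unfolding is_jet_section_def lower_trunc_zero_def by blast
qed

theorem mainTheorem11:
  fixes r :: nat
  assumes "r \<ge> 1"
  shows "\<exists>Phi :: ('m::finite \<Rightarrow> nat) \<Rightarrow> ('m,'n::finite) fibre \<Rightarrow> ('m,'n) fibre.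
     (\<forall>beta\<in>beta_indices r. smooth_fibre_map r (Phi beta)) \<and>
     (\<forall>sigma :: real^'m \<Rightarrow> ('m,'n) fibre.
        is_jet_section r sigma \<and> lower_trunc_zero r sigma \<longrightarrow>
          (\<forall>x\<in>cube. \<forall>alpha. sigma x alpha = (\<Sum>beta\<in>beta_indices r. Phi beta (sigma x) alpha)) \<and>
          (\<forall>beta\<in>beta_indices r. primitive r (tau_hyp beta) (\<lambda>x. Phi beta (sigma x))) \<and>
          (\<forall>A. closed A \<and> A \<subseteq> cube \<and>
               (\<exists>U. open U \<and> A \<subseteq> U \<and> (\<forall>x\<in>U \<inter> cube. sigma x = (\<lambda>alpha. 0))) \<longrightarrow>
               (\<forall>beta\<in>beta_indices r. \<exists>V. open V \<and> A \<subseteq> V \<and>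
                  (\<forall>x\<in>V \<inter> cube. Phi beta (sigma x) = (\<lambda>alpha. 0)))))"
proof (intro exI[of _ "ridge_part r"] conjI ballI allI impI)
  fix beta :: "'m \<Rightarrow> nat"
  show "smooth_fibre_map r (ridge_part r beta :: ('m,'n) fibre \<Rightarrow> _)"
    by (rule ridge_part_smooth)
next
  fix sigma :: "real^'m \<Rightarrow> ('m,'n) fibre" and x :: "real^'m" and alpha
  assume "is_jet_section r sigma \<and> lower_trunc_zero r sigma" and "x \<in> cube"
  then have "sigma x \<in> Hr r" by (intro jet_section_in_Hr) auto
  then show "sigma x alpha = (\<Sum>beta\<in>beta_indices r. ridge_part r beta (sigma x) alpha)"
    by (rule ridge_part_decomp[OF assms])
next
  fix sigma :: "real^'m \<Rightarrow> ('m,'n) fibre" and beta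
  show "primitive r (tau_hyp beta) (\<lambda>x. ridge_part r beta (sigma x))"
    by (rule ridge_part_primitive[OF assms])
next
  fix sigma :: "real^'m \<Rightarrow> ('m,'n) fibre" and A :: "(real^'m) set" and beta
  assume "closed A \<and> A \<subseteq> cube \<and> (\<exists>U. open U \<and> A \<subseteq> U \<and> (\<forall>x\<in>U \<inter> cube. sigma x = (\<lambda>alpha. 0)))"
  then obtain U where U: "open U" "A \<subseteq> U" and vanish: "\<forall>x\<in>U \<inter> cube. sigma x = (\<lambda>alpha. 0)"
    by blast
  have "\<forall>x\<in>U \<inter> cube. ridge_part r beta (sigma x) = (\<lambda>alpha. 0)"
    using vanish by (simp add: ridge_part_zero)
  with U show "\<exists>V. open V \<and> A \<subseteq> V \<and> (\<forall>x\<in>V \<inter> cube. ridge_part r beta (sigma x) = (\<lambda>alpha. 0))"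
    by blast
qed

end
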